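(* With $\Delta=\{D_1,\dots,D_6\}$ and $\sigma_1=D_1+D_2-D_3$, $\sigma_2=-D_1+D_2+D_3-D_4-D_6$, $\sigma_3=-D_2+D_3+D_4-D_5$, $\sigma_4=-D_3+D_4+D_5$, $\sigma_5=-D_5+D_6$ in $\mathbb Z\Delta$, let $(D,E,F)$ be a low fundamental triple, put $\gamma=D+E-F$, and suppose $\sigma_5\in\mathrm{supp}_\Sigma\gamma$. Then, up to exchanging $D$ and $E$, $(D,E,F)$ is one of: $(D_2,D_3,D_1+D_4+D_5)$ with $\gamma=\sigma_2+\sigma_5$; $(D_3,D_3,D_1+2D_5)$ with $\gamma=\sigma_2+\sigma_3+\sigma_5$; $(D_2,D_2,D_4+D_5)$ with $\gamma=\sigma_1+\sigma_2+\sigma_5$; $(D_2,D_3,2D_5)$ with $\gamma=\sigma_1+\sigma_2+\sigma_3+\sigma_5$; $(D_3,D_4,D_1+D_5)$ with $\gamma=\sigma_2+\sigma_3+\sigma_4+\sigma_5$; $(D_4,D_4,D_1)$ with $\gamma=\sigma_2+\sigma_3+2\sigma_4+\sigma_5$.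
   Context: $\Sigma=\{\sigma_1,\dots,\sigma_5\}$. For $D,E\in\mathbb Z\Delta$ write $D\le_\Sigma E$ if $E-D\in\mathbb N\Sigma$. A triple $(D,E,F)\in(\mathbb N\Delta)^3$ with $F\le_\Sigma D+E$ is low if for all $D',E'\in\mathbb N\Delta$ with $D'\le_\Sigma D$, $E'\le_\Sigma E$ and $F\le_\Sigma D'+E'$ one has $D'=D$ and $E'=E$; it is fundamental if $D,E\in\Delta$. For $\gamma=\sum a_i\sigma_i\in\mathbb N\Sigma$, $\mathrm{supp}_\Sigma\gamma=\{\sigma_i:a_i>0\}$. *)

theory Defs
  imports Main "HOL-Library.Function_Algebras"
begin

text \<open>The basis Delta = {D1,...,D6}; ZDelta is the free abelian group on it,
  represented as functions delta => int (with pointwise operations).\<close>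

datatype delta = d1 | d2 | d3 | d4 | d5 | d6

type_synonym zdelta = "delta \<Rightarrow> int"

definition D :: "nat \<Rightarrow> zdelta" where
  "D i = (\<lambda>x. if x = ([d1, d2, d3, d4, d5, d6] ! (i - 1)) then 1 else 0)"

definition sigma :: "nat \<Rightarrow> zdelta" where
  "sigma i = (if i = 1 then D 1 + D 2 - D 3
    else if i = 2 then - D 1 + D 2 + D 3 - D 4 - D 6
    else if i = 3 then - D 2 + D 3 + D 4 - D 5
    else if i = 4 then - D 3 + D 4 + D 5
    else if i = 5 then - D 5 + D 6
    else 0)"

definition sigma_coeffs :: "(nat \<Rightarrow> nat) \<Rightarrow> zdelta \<Rightarrow> bool" where
  "sigma_coeffs a g \<longleftrightarrow> g = (\<Sum>i\<in>{1..5}. of_nat (a i) * sigma i)"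

definition NSigma :: "zdelta set" where
  "NSigma = {g. \<exists>a. sigma_coeffs a g}"

definition NDelta :: "zdelta set" where
  "NDelta = {x. \<forall>d. x d \<ge> 0}"

definition Delta :: "zdelta set" where
  "Delta = D ` {1..6}"

definition le_Sigma :: "zdelta \<Rightarrow> zdelta \<Rightarrow> bool" where
  "le_Sigma x y \<longleftrightarrow> y - x \<in> NSigma"

definition supp_Sigma :: "zdelta \<Rightarrow> zdelta set" where
  "supp_Sigma g = {sigma i | i. i \<in> {1..5} \<and> (\<exists>a. sigma_coeffs a g \<and> a i > 0)}"

definition low_triple :: "zdelta \<Rightarrow> zdelta \<Rightarrow> zdelta \<Rightarrow> bool" where
  "low_triple x y z \<longleftrightarrow> x \<in> NDelta \<and> y \<in> NDelta \<and> z \<in> NDelta \<and> le_Sigma z (x + y) \<and>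
     (\<forall>x' y'. x' \<in> NDelta \<longrightarrow> y' \<in> NDelta \<longrightarrow> le_Sigma x' x \<longrightarrow> le_Sigma y' y \<longrightarrow>
        le_Sigma z (x' + y') \<longrightarrow> x' = x \<and> y' = y)"

definition fundamental :: "zdelta \<Rightarrow> zdelta \<Rightarrow> zdelta \<Rightarrow> bool" where
  "fundamental x y z \<longleftrightarrow> x \<in> Delta \<and> y \<in> Delta"

end

theory Submission
  imports Defs
begin

text \<open>Write \<open>\<gamma> = D + E - F = \<Sum> a\<^sub>i \<sigma>\<^sub>i\<close> with \<open>a\<^sub>5 > 0\<close>. Lowness forbids
  lowering \<open>D\<close> or \<open>E\<close> by any \<open>\<Sigma>\<close>-combination that still fits below \<open>\<gamma>\<close>. Since
  \<open>D\<^sub>6 - D\<^sub>5 = \<sigma>\<^sub>5\<close>, neither summand is \<open>D\<^sub>6\<close>; since \<open>D\<^sub>2 - D\<^sub>1 = \<sigma>\<^sub>2 + \<sigma>\<^sub>4 + \<sigma>\<^sub>5\<close>,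
  a summand \<open>D\<^sub>2\<close> forces \<open>a\<^sub>2 = 0\<close> or \<open>a\<^sub>4 = 0\<close>. What remains is a finite linear
  problem: nonnegativity of the six coordinates of \<open>F\<close> leaves exactly the six listed
  coefficient vectors.\<close>

lemma all_delta: "(\<forall>x. P x) \<longleftrightarrow> P d1 \<and> P d2 \<and> P d3 \<and> P d4 \<and> P d5 \<and> P d6"
  by (metis delta.exhaust)

lemma D_apply [simp]:
  \<comment> \<open>the \<open>Suc 0\<close> form is needed because simp rewrites \<open>1::nat\<close> to it inside arguments\<close>
  "D 1 x = (if x = d1 then 1 else 0)" "D (Suc 0) x = (if x = d1 then 1 else 0)"
  "D 2 x = (if x = d2 then 1 else 0)" "D 3 x = (if x = d3 then 1 else 0)"
  "D 4 x = (if x = d4 then 1 else 0)" "D 5 x = (if x = d5 then 1 else 0)"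
  "D 6 x = (if x = d6 then 1 else 0)"
  by (simp_all add: D_def)

lemma sigma_coeffs_iff: "sigma_coeffs a g \<longleftrightarrow>
   g d1 = int (a 1) - int (a 2) \<and>
   g d2 = int (a 1) + int (a 2) - int (a 3) \<and>
   g d3 = - int (a 1) + int (a 2) + int (a 3) - int (a 4) \<and>
   g d4 = - int (a 2) + int (a 3) + int (a 4) \<and>
   g d5 = - int (a 3) + int (a 4) - int (a 5) \<and>
   g d6 = - int (a 2) + int (a 5)"
proof -
  have "{1..5::nat} = {1,2,3,4,5}" by auto
  then show ?thesis
    unfolding sigma_coeffs_def fun_eq_iff all_delta by (simp add: sigma_def algebra_simps)
qed

lemma sigma_coeffs_diff:
  assumes "sigma_coeffs a g" "sigma_coeffs b h" "\<And>n. b n \<le> a n"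
  shows "sigma_coeffs (\<lambda>n. a n - b n) (g - h)"
  using assms unfolding sigma_coeffs_iff by (simp add: of_nat_diff)

lemma le_SigmaI: "sigma_coeffs a (y - x) \<Longrightarrow> le_Sigma x y"
  by (auto simp: le_Sigma_def NSigma_def)

lemma low_triple_commute: "low_triple X Y Z \<Longrightarrow> low_triple Y X Z"
  unfolding low_triple_def by (simp add: add.commute)

lemma low_triple_left_minimal:
  assumes low: "low_triple X Y Z" and a: "sigma_coeffs a (X + Y - Z)"
    and b: "sigma_coeffs b (X - X')" and le: "\<And>n. b n \<le> a n" and X': "X' \<in> NDelta"
  shows "X' = X"
proof -
  have "sigma_coeffs (\<lambda>n. a n - b n) (X' + Y - Z)"
    using sigma_coeffs_diff[OF a b le] by (simp add: algebra_simps)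
  moreover have "sigma_coeffs (\<lambda>n. 0) (Y - Y)"
    by (simp add: sigma_coeffs_iff)
  ultimately show ?thesis
    using low X' le_SigmaI[OF b] unfolding low_triple_def by (blast intro: le_SigmaI)
qed

lemma low_triple_minimal:
  assumes low: "low_triple X Y Z" and a: "sigma_coeffs a (X + Y - Z)" and W: "W \<in> {X, Y}"
    and b: "sigma_coeffs b (W - W')" and le: "\<And>n. b n \<le> a n" and W': "W' \<in> NDelta"
  shows "W' = W"
  using W
proof
  assume "W = X"
  then show ?thesis using low_triple_left_minimal[OF low a _ le W'] b by simp
next
  assume "W \<in> {Y}"
  then show ?thesis
    using low_triple_left_minimal[OF low_triple_commute[OF low] _ _ le W'] a b
    by (simp add: add.commute)
qed

lemma supp_Sigma_sigma5E:
  assumes "sigma 5 \<in> supp_Sigma g"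
  obtains a where "sigma_coeffs a g" "a 5 > 0"
proof -
  obtain i a where i: "sigma i = sigma 5" "i \<in> {1..5}" and "sigma_coeffs a g" "a i > 0"
    using assms unfolding supp_Sigma_def by auto
  moreover have "i \<in> {1, 2, 3, 4, 5}"
    using i(2) by auto
  then have "i = 5"
    using fun_cong[OF i(1), of d6] by (auto simp: sigma_def)
  ultimately show thesis using that by blast
qed

lemma sigma5_gamma_coeffs_cases:
  assumes a: "sigma_coeffs a (D p + D q - Z)" and Z: "Z \<in> NDelta"
    and pq: "p \<in> {1..5}" "q \<in> {1..5}" "p \<le> q" and a5: "a 5 > 0"
    and "2 \<in> {p, q} \<longrightarrow> a 2 = 0 \<or> a 4 = 0"
  shows "(p, q, a 1, a 2, a 3, a 4, a 5) \<in> {(2, 3, 0, 1, 0, 0, 1), (3, 3, 0, 1, 1, 0, 1),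
    (2, 2, 1, 1, 0, 0, 1), (2, 3, 1, 1, 1, 0, 1), (3, 4, 0, 1, 1, 1, 1), (4, 4, 0, 1, 1, 2, 1)}"
proof -
  have "Z d1 \<ge> 0" "Z d2 \<ge> 0" "Z d3 \<ge> 0" "Z d4 \<ge> 0" "Z d5 \<ge> 0" "Z d6 \<ge> 0"
    using Z by (auto simp: NDelta_def)
  then have z: "D p d1 + D q d1 - int (a 1) + int (a 2) \<ge> 0"
    "D p d2 + D q d2 - int (a 1) - int (a 2) + int (a 3) \<ge> 0"
    "D p d3 + D q d3 + int (a 1) - int (a 2) - int (a 3) + int (a 4) \<ge> 0"
    "D p d4 + D q d4 + int (a 2) - int (a 3) - int (a 4) \<ge> 0"
    "D p d5 + D q d5 + int (a 3) - int (a 4) + int (a 5) \<ge> 0"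
    "D p d6 + D q d6 + int (a 2) - int (a 5) \<ge> 0"
    using a unfolding sigma_coeffs_iff by auto
  from pq have "p \<in> {1,2,3,4,5}" "q \<in> {1,2,3,4,5}" by auto
  then show ?thesis using z a5 assms(7) pq(3)
    by (elim insertE emptyE) (simp_all, presburger+)
qed

lemma low_triple_sigma5_cases:
  assumes low: "low_triple (D p) (D q) Z" and pq: "p \<in> {1..6}" "q \<in> {1..6}" "p \<le> q"
    and supp: "sigma 5 \<in> supp_Sigma (D p + D q - Z)"
  shows "(p, q, Z, D p + D q - Z) \<in> {(2, 3, D 1 + D 4 + D 5, sigma 2 + sigma 5),
    (3, 3, D 1 + 2 * D 5, sigma 2 + sigma 3 + sigma 5), (2, 2, D 4 + D 5, sigma 1 + sigma 2 + sigma 5),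
    (2, 3, 2 * D 5, sigma 1 + sigma 2 + sigma 3 + sigma 5),
    (3, 4, D 1 + D 5, sigma 2 + sigma 3 + sigma 4 + sigma 5),
    (4, 4, D 1, sigma 2 + sigma 3 + 2 * sigma 4 + sigma 5)}"
proof -
  obtain a where a: "sigma_coeffs a (D p + D q - Z)" and a5: "a 5 > 0"
    using supp_Sigma_sigma5E[OF supp] .
  have Z: "Z \<in> NDelta"
    using low by (simp add: low_triple_def)
  have D_NDelta: "D i \<in> NDelta" for i
    by (simp add: NDelta_def D_def)
  have "q \<noteq> 6"
  proof
    assume "q = 6"
    have "sigma_coeffs (\<lambda>n. if n = 5 then 1 else 0) (D 6 - D 5)"
      by (simp add: sigma_coeffs_iff)
    then have "D 5 = D 6"
      by (rule low_triple_minimal[OF low a _ _ _ D_NDelta, rotated])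
        (use \<open>q = 6\<close> a5 in auto)
    from fun_cong[OF this, of d5] show False by simp
  qed
  with pq have p: "p \<in> {1..5}" and q: "q \<in> {1..5}" by auto
  have no_D2: "2 \<in> {p, q} \<longrightarrow> a 2 = 0 \<or> a 4 = 0"
  proof (rule impI, rule ccontr)
    assume "2 \<in> {p, q}" "\<not> (a 2 = 0 \<or> a 4 = 0)"
    have "sigma_coeffs (\<lambda>n. if n = 2 \<or> n = 4 \<or> n = 5 then 1 else 0) (D 2 - D 1)"
      by (simp add: sigma_coeffs_iff)
    then have "D 1 = D 2"
      by (rule low_triple_minimal[OF low a _ _ _ D_NDelta, rotated])
        (use \<open>2 \<in> {p, q}\<close> \<open>\<not> (a 2 = 0 \<or> a 4 = 0)\<close> a5 in auto)
    from fun_cong[OF this, of d1] show False by simp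
  qed
  note coeffs = sigma5_gamma_coeffs_cases[OF a Z p q pq(3) a5 no_D2]
  have "{1..5::nat} = {1, 2, 3, 4, 5}" by auto
  then have gamma: "D p + D q - Z = of_nat (a 1) * sigma 1 + of_nat (a 2) * sigma 2 +
      of_nat (a 3) * sigma 3 + of_nat (a 4) * sigma 4 + of_nat (a 5) * sigma 5"
    using a by (simp add: sigma_coeffs_def add.assoc)
  have "Z = D p + D q - (of_nat (a 1) * sigma 1 + of_nat (a 2) * sigma 2 +
      of_nat (a 3) * sigma 3 + of_nat (a 4) * sigma 4 + of_nat (a 5) * sigma 5)"
    by (subst gamma[symmetric]) simp
  with coeffs gamma show ?thesis
    by (elim insertE emptyE) (simp_all add: fun_eq_iff all_delta sigma_def)
qed

theorem lemma2p8:
  fixes X Y Z :: zdelta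
  assumes "low_triple X Y Z" and "fundamental X Y Z"
    and "sigma 5 \<in> supp_Sigma (X + Y - Z)"
  shows "let g = X + Y - Z;
             pair = (\<lambda>a b. (X = a \<and> Y = b) \<or> (X = b \<and> Y = a)) in
     (pair (D 2) (D 3) \<and> Z = D 1 + D 4 + D 5 \<and> g = sigma 2 + sigma 5)
   \<or> (pair (D 3) (D 3) \<and> Z = D 1 + 2 * D 5 \<and> g = sigma 2 + sigma 3 + sigma 5)
   \<or> (pair (D 2) (D 2) \<and> Z = D 4 + D 5 \<and> g = sigma 1 + sigma 2 + sigma 5)
   \<or> (pair (D 2) (D 3) \<and> Z = 2 * D 5 \<and> g = sigma 1 + sigma 2 + sigma 3 + sigma 5)
   \<or> (pair (D 3) (D 4) \<and> Z = D 1 + D 5 \<and> g = sigma 2 + sigma 3 + sigma 4 + sigma 5)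
   \<or> (pair (D 4) (D 4) \<and> Z = D 1 \<and> g = sigma 2 + sigma 3 + 2 * sigma 4 + sigma 5)"
proof -
  obtain p q where "X = D p" "p \<in> {1..6}" "Y = D q" "q \<in> {1..6}"
    using assms(2) unfolding fundamental_def Delta_def by auto
  then obtain m n where mn: "m \<le> n" "m \<in> {1..6}" "n \<in> {1..6}"
    and XY: "(X = D m \<and> Y = D n) \<or> (X = D n \<and> Y = D m)"
    by (metis nle_le)
  then have sum: "X + Y = D m + D n"
    by (auto simp: add.commute)
  from XY have low: "low_triple (D m) (D n) Z"
    using assms(1) low_triple_commute by blast
  have supp: "sigma 5 \<in> supp_Sigma (D m + D n - Z)"
    using assms(3) sum by simp
  from low_triple_sigma5_cases[OF low mn(2,3,1) supp] XY show ?thesis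
    unfolding sum Let_def by auto
qed

end
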